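(* Let $(X,d)$ be a metric space and $\emptyset\neq A\subseteq X$. (i) If $\alpha:\mathbb{N}\to\mathbb{N}$ is a I-modulus of total boundedness for $A$, then $\gamma(k):=\alpha(2k+1)+1$ is a II-modulus of total boundedness for $A$. (ii) If $\gamma:\mathbb{N}\to\mathbb{N}$ is a II-modulus of total boundedness for $A$, then $\alpha(k):=\gamma(k)-1$ is a I-modulus of total boundedness for $A$ (in particular, $A$ is totally bounded).
   Context: $\mathbb{N}$ includes $0$. A map $\alpha:\mathbb{N}\to\mathbb{N}$ is a I-modulus of total boundedness for $A$ if for every $k\in\mathbb{N}$ there exist $a_0,\dots,a_{\alpha(k)}\in X$ such that for every $x\in A$ there is $0\le i\le\alpha(k)$ with $d(x,a_i)\le \frac1{k+1}$. A map $\gamma:\mathbb{N}\to\mathbb{N}$ is a II-modulus of total boundedness for $A$ if for every $k\in\mathbb{N}$ and every sequence $(x_n)$ in $A$ there exist $0\le i<j\le\gamma(k)$ with $d(x_i,x_j)\le\frac1{k+1}$. *)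

theory Defs
  imports "HOL-Analysis.Analysis"
begin

definition I_modulus :: "'a::metric_space set \<Rightarrow> (nat \<Rightarrow> nat) \<Rightarrow> bool" where
  "I_modulus A \<alpha> \<longleftrightarrow>
     (\<forall>k. \<exists>a::nat \<Rightarrow> 'a. \<forall>x\<in>A. \<exists>i\<le>\<alpha> k. dist x (a i) \<le> 1 / (real k + 1))"

definition II_modulus :: "'a::metric_space set \<Rightarrow> (nat \<Rightarrow> nat) \<Rightarrow> bool" where
  "II_modulus A \<gamma> \<longleftrightarrow>
     (\<forall>k. \<forall>x::nat \<Rightarrow> 'a. (\<forall>n. x n \<in> A) \<longrightarrow>
        (\<exists>i j. i < j \<and> j \<le> \<gamma> k \<and> dist (x i) (x j) \<le> 1 / (real k + 1)))"

end

theory Submission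
  imports Defs
begin

text \<open>(i) Cover A by the \<open>\<alpha>(2k+1)+1\<close> balls of radius \<open>1/(2k+2)\<close>; among
  \<open>\<alpha>(2k+1)+2\<close> terms of a sequence two lie in the same ball, hence within \<open>1/(k+1)\<close>.
  (ii) If \<open>\<gamma> k\<close> points never sufficed as centres of \<open>1/(k+1)\<close>-balls covering A, one
  could pick \<open>\<gamma> k + 1\<close> points of A greedily, each farther than \<open>1/(k+1)\<close> from all
  earlier ones, contradicting the II-modulus.\<close>

lemma nat_map_to_atMost_collides:
  fixes f :: "nat \<Rightarrow> nat"
  assumes "\<And>n. n \<le> Suc N \<Longrightarrow> f n \<le> N"
  obtains i j where "i < j" "j \<le> Suc N" "f i = f j"
proof -
  have "f ` {..Suc N} \<subseteq> {..N}" using assms by auto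
  then have "card (f ` {..Suc N}) \<le> card {..N}"
    by (intro card_mono) auto
  then have "card (f ` {..Suc N}) < card {..Suc N}" by simp
  then have "\<not> inj_on f {..Suc N}" by (rule pigeonhole)
  then obtain i j where "i \<le> Suc N" "j \<le> Suc N" "i \<noteq> j" "f i = f j"
    unfolding inj_on_def by auto
  then show thesis
    using that by (cases "i < j") (auto simp: not_less_iff_gr_or_eq)
qed

lemma I_modulus_imp_II_modulus:
  fixes A :: "'a::metric_space set"
  assumes "I_modulus A \<alpha>"
  shows "II_modulus A (\<lambda>k. \<alpha> (2 * k + 1) + 1)"
  unfolding II_modulus_def
proof (intro allI impI)
  fix k and x :: "nat \<Rightarrow> 'a"
  assume xA: "\<forall>n. x n \<in> A"
  define N where "N = \<alpha> (2 * k + 1)"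
  define r where "r = 1 / (real (2 * k + 1) + 1)"
  obtain a where a: "\<forall>y\<in>A. \<exists>i\<le>N. dist y (a i) \<le> r"
    using assms unfolding I_modulus_def N_def r_def by blast
  define c where "c n = (SOME i. i \<le> N \<and> dist (x n) (a i) \<le> r)" for n
  have c: "c n \<le> N \<and> dist (x n) (a (c n)) \<le> r" for n
    unfolding c_def by (rule someI_ex) (use a xA in blast)
  obtain i j where ij: "i < j" "j \<le> Suc N" "c i = c j"
    using nat_map_to_atMost_collides[of N c] c by blast
  have "dist (x i) (x j) \<le> dist (x i) (a (c i)) + dist (x j) (a (c i))"
    by (rule dist_triangle2)
  also have "\<dots> \<le> 2 * r" using c[of i] c[of j] ij(3) by simp
  also have "2 * r = 1 / (real k + 1)" unfolding r_def by (simp add: field_simps)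
  finally show "\<exists>i j. i < j \<and> j \<le> \<alpha> (2 * k + 1) + 1 \<and> dist (x i) (x j) \<le> 1 / (real k + 1)"
    using ij N_def by auto
qed

lemma exists_separated_sequence:
  fixes A :: "'a::metric_space set"
  assumes "x\<^sub>0 \<in> A"
    and no_net: "\<And>a. \<exists>y\<in>A. \<forall>i\<le>m. r < dist y (a i)"
  shows "\<exists>s. (\<forall>i. s i \<in> A) \<and> (\<forall>i j. i < j \<and> j \<le> Suc m \<longrightarrow> r < dist (s i) (s j))"
proof -
  have "\<exists>s. (\<forall>i. s i \<in> A) \<and> (\<forall>i j. i < j \<and> j \<le> n \<longrightarrow> r < dist (s i) (s j))"
    if "n \<le> Suc m" for n
    using that
  proof (induction n)
    case 0
    show ?case using \<open>x\<^sub>0 \<in> A\<close> by (intro exI[of _ "\<lambda>_. x\<^sub>0"]) auto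
  next
    case (Suc n)
    then obtain s where sA: "\<forall>i. s i \<in> A"
      and sep: "\<forall>i j. i < j \<and> j \<le> n \<longrightarrow> r < dist (s i) (s j)" by auto
    obtain y where "y \<in> A" and far: "\<forall>i\<le>m. r < dist y (s i)"
      using no_net by blast
    have "r < dist ((s(Suc n := y)) i) ((s(Suc n := y)) j)" if "i < j" "j \<le> Suc n" for i j
      using that sep far Suc.prems by (cases "j = Suc n") (auto simp: dist_commute)
    then show ?case using sA \<open>y \<in> A\<close> by (intro exI[of _ "s(Suc n := y)"]) auto
  qed
  then show ?thesis by blast
qed

lemma II_modulus_imp_I_modulus:
  fixes A :: "'a::metric_space set"
  assumes "A \<noteq> {}" and "II_modulus A \<gamma>"
  shows "I_modulus A (\<lambda>k. \<gamma> k - 1)"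
  unfolding I_modulus_def
proof (rule allI, rule ccontr)
  fix k
  define r where "r = 1 / (real k + 1)"
  assume "\<not> (\<exists>a::nat \<Rightarrow> 'a. \<forall>x\<in>A. \<exists>i\<le>\<gamma> k - 1. dist x (a i) \<le> 1 / (real k + 1))"
  then have no_net: "\<exists>y\<in>A. \<forall>i\<le>\<gamma> k - 1. r < dist y (a i)" for a :: "nat \<Rightarrow> 'a"
    unfolding r_def by (metis not_le)
  obtain x\<^sub>0 where "x\<^sub>0 \<in> A" using assms(1) by auto
  then obtain s where sA: "\<forall>i. s i \<in> A"
    and sep: "\<forall>i j. i < j \<and> j \<le> Suc (\<gamma> k - 1) \<longrightarrow> r < dist (s i) (s j)"
    using exists_separated_sequence[OF _ no_net] by blast
  from assms(2) sA obtain i j where "i < j" "j \<le> \<gamma> k" "dist (s i) (s j) \<le> r"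
    unfolding II_modulus_def r_def by blast
  with sep show False by force
qed

lemma I_modulus_imp_totally_bounded:
  fixes A :: "'a::metric_space set"
  assumes "I_modulus A \<alpha>"
  shows "totally_bounded A"
  unfolding totally_bounded_metric
proof (intro allI impI)
  fix e :: real
  assume "e > 0"
  obtain k :: nat where "1 / e < real k" using reals_Archimedean2 by blast
  with \<open>e > 0\<close> have k: "1 / (real k + 1) < e" by (simp add: field_simps)
  obtain a where a: "\<forall>x\<in>A. \<exists>i\<le>\<alpha> k. dist x (a i) \<le> 1 / (real k + 1)"
    using assms unfolding I_modulus_def by blast
  have "A \<subseteq> (\<Union>c\<in>a ` {..\<alpha> k}. {y. dist c y < e})"
    using a k by (force simp: dist_commute)
  then show "\<exists>K. finite K \<and> A \<subseteq> (\<Union>c\<in>K. {y. dist c y < e})"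
    by (intro exI[of _ "a ` {..\<alpha> k}"]) simp
qed

theorem proposition2p4:
  fixes A :: "'a::metric_space set"
  assumes "A \<noteq> {}"
  shows "(\<forall>\<alpha>. I_modulus A \<alpha> \<longrightarrow> II_modulus A (\<lambda>k. \<alpha> (2 * k + 1) + 1))
       \<and> (\<forall>\<gamma>. II_modulus A \<gamma> \<longrightarrow> I_modulus A (\<lambda>k. \<gamma> k - 1) \<and> totally_bounded A)"
  using I_modulus_imp_II_modulus II_modulus_imp_I_modulus[OF assms]
    I_modulus_imp_totally_bounded by blast

end
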